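(* Consider the measurement scenario with observables $\mathcal{X} = \{x_1, x_2, x_3\}$, contexts $\mathcal{M} = \{\{x_1, x_2\}, \{x_2, x_3\}, \{x_1, x_3\}\}$ and outcomes $\mathcal{O} = \{0,1\}$. Up to relabelling, the only strongly contextual (possibilistic) empirical model on this scenario is the one in which perfect correlation is observed on two of the contexts and perfect anti-correlation is observed on the remaining context; i.e. (up to relabelling) the supports are $\{(0,0),(1,1)\}$ on $\{x_1,x_2\}$ and on $\{x_2,x_3\}$, and $\{(0,1),(1,0)\}$ on $\{x_3,x_1\}$ (listing outcomes of $x_3$ then $x_1$).
   Context: An empirical model on a measurement scenario $\langle \mathcal{X}, \mathcal{M}, \mathcal{O}\rangle$ is a compatible family $\{D_C\}_{C\in\mathcal{M}}$ of distributions $D_C$ on $\mathcal{O}^C$ (marginals on overlaps of contexts agree). Its possibilistic collapse replaces each $D_C$ by its support $S_C = \{s \in \mathcal{O}^C : D_C(s) > 0\}$ (possible joint outcomes); a possibilistic empirical model is such a compatible family of nonempty supports. A local section $s \in S_C$ extends to a global section if there is an assignment $g : \mathcal{X} \to \mathcal{O}$ with $g|_C = s$ and $g|_{C'} \in S_{C'}$ for every $C' \in \mathcal{M}$. The model is strongly contextual if no local section (in any context) extends to a global section, equivalently there is no assignment $g:\mathcal{X}\to\mathcal{O}$ with $g|_C \in S_C$ for all $C \in \mathcal{M}$. Perfect correlation on a context $\{x_i,x_j\}$ means the support is $\{(0,0),(1,1)\}$; perfect anti-correlation means the support is $\{(0,1),(1,0)\}$. Relabelling means permuting observables and permuting the outcomes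 of individual observables. *)

theory Defs
  imports Main
begin

text \<open>Observables X = {x1,x2,x3}; outcomes O = {0,1} rendered as bool (False = 0, True = 1).\<close>
datatype obs = X1 | X2 | X3

text \<open>A section on a context C: a map from C to O, i.e. a partial function with domain exactly C.\<close>
type_synonym sect = "obs \<Rightarrow> bool option"

definition contexts :: "obs set set" where
  "contexts = {{X1, X2}, {X2, X3}, {X1, X3}}"

definition sections_on :: "obs set \<Rightarrow> sect set" where
  "sections_on C = {s. dom s = C}"

definition poss_model :: "(obs set \<Rightarrow> sect set) \<Rightarrow> bool" where
  "poss_model S \<longleftrightarrow>
     (\<forall>C\<in>contexts. S C \<subseteq> sections_on C \<and> S C \<noteq> {}) \<and>
     (\<forall>C\<in>contexts. \<forall>C'\<in>contexts.
        (\<lambda>s. s |` (C \<inter> C')) ` S C = (\<lambda>s. s |` (C \<inter> C')) ` S C')"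

definition strongly_contextual :: "(obs set \<Rightarrow> sect set) \<Rightarrow> bool" where
  "strongly_contextual S \<longleftrightarrow>
     \<not> (\<exists>g :: obs \<Rightarrow> bool. \<forall>C\<in>contexts. (Some \<circ> g) |` C \<in> S C)"

text \<open>A sect s on C becomes the sect on the image of C under sigma, sending sigma x to tau x (s x).\<close>
definition relabel_section :: "(obs \<Rightarrow> obs) \<Rightarrow> (obs \<Rightarrow> bool \<Rightarrow> bool) \<Rightarrow> sect \<Rightarrow> sect" where
  "relabel_section \<sigma> \<tau> s = (\<lambda>y. map_option (\<tau> (inv \<sigma> y)) (s (inv \<sigma> y)))"

definition relabel :: "(obs \<Rightarrow> obs) \<Rightarrow> (obs \<Rightarrow> bool \<Rightarrow> bool)
    \<Rightarrow> (obs set \<Rightarrow> sect set) \<Rightarrow> (obs set \<Rightarrow> sect set)" where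
  "relabel \<sigma> \<tau> S = (\<lambda>C. relabel_section \<sigma> \<tau> ` S (inv \<sigma> ` C))"

definition is_relabelling :: "(obs \<Rightarrow> obs) \<Rightarrow> (obs \<Rightarrow> bool \<Rightarrow> bool) \<Rightarrow> bool" where
  "is_relabelling \<sigma> \<tau> \<longleftrightarrow> bij \<sigma> \<and> (\<forall>x. bij (\<tau> x))"

definition PR_model :: "obs set \<Rightarrow> sect set" where
  "PR_model C =
     (if C = {X1, X2} then {[X1 \<mapsto> b, X2 \<mapsto> b] | b. True}
      else if C = {X2, X3} then {[X2 \<mapsto> b, X3 \<mapsto> b] | b. True}
      else if C = {X1, X3} then {[X3 \<mapsto> b, X1 \<mapsto> \<not> b] | b. True}
      else {})"

end

(*
  Write the support of a two-element context as a relation between the outcomes of its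
  observables, oriented around the cycle x1 -> x2 -> x3 -> x1. Strong contextuality says no
  outcome triple closes up around the cycle. With binary outcomes this forces every relation
  to be the graph of a bijection of {0,1}: a relation that is not total would leave a single
  possible value at one observable, so every walk around the cycle would close, and a value
  with two partners closes a cycle through the third observable. Hence each context is
  perfectly correlated or anti-correlated, and an odd number of them are anti-correlated,
  which is the PR-type model up to flipping outcomes. Conversely, a relabelling turns a global
  section of a model into one of the relabelled model, and the PR-type model has none by parity.
*)
theory Submission
  imports Defs
begin

lemma in_contexts_iff: "C \<in> contexts \<longleftrightarrow> (\<exists>x y. x \<noteq> y \<and> C = {x, y})"
proof
  assume "\<exists>x y. x \<noteq> y \<and> C = {x, y}"
  then obtain x y where "x \<noteq> y" "C = {x, y}" by blast
  then show "C \<in> contexts"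
    by (cases x; cases y) (auto simp: contexts_def insert_commute)
qed (auto simp: contexts_def)

lemma doubleton_in_contexts: "x \<noteq> y \<Longrightarrow> {x, y} \<in> contexts"
  using in_contexts_iff by blast

lemma restrict_Some_comp_doubleton: "(Some \<circ> g) |` {x, y} = [x \<mapsto> g x, y \<mapsto> g y]"
  by (rule ext) (auto simp: restrict_map_def)

lemma map_upd_pair_eq_iff:
  "x \<noteq> y \<Longrightarrow> [x \<mapsto> a, y \<mapsto> b] = [x \<mapsto> a', y \<mapsto> b'] \<longleftrightarrow> a = a' \<and> b = b'"
  by (metis fun_upd_same fun_upd_twist option.inject)

lemma section_on_doubleton:
  assumes "s \<in> sections_on {x, y}"
  shows "s = [x \<mapsto> the (s x), y \<mapsto> the (s y)]"
proof (rule ext)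
  fix z
  have dom: "dom s = {x, y}" using assms by (simp add: sections_on_def)
  show "s z = [x \<mapsto> the (s x), y \<mapsto> the (s y)] z"
  proof (cases "z \<in> {x, y}")
    case True
    then have "s z \<noteq> None" using dom by blast
    then show ?thesis using True by auto
  next
    case False
    then have "s z = None" using dom by blast
    then show ?thesis using False by auto
  qed
qed

definition possible :: "(obs set \<Rightarrow> sect set) \<Rightarrow> obs \<Rightarrow> obs \<Rightarrow> bool \<Rightarrow> bool \<Rightarrow> bool" where
  "possible S x y a b \<longleftrightarrow> [x \<mapsto> a, y \<mapsto> b] \<in> S {x, y}"

lemma possible_commute: "x \<noteq> y \<Longrightarrow> possible S y x b a \<longleftrightarrow> possible S x y a b"
  unfolding possible_def by (simp add: insert_commute fun_upd_twist)

lemma support_eq_possible: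
  assumes "poss_model S" "x \<noteq> y"
  shows "S {x, y} = {[x \<mapsto> a, y \<mapsto> b] | a b. possible S x y a b}"
proof -
  have "S {x, y} \<subseteq> sections_on {x, y}"
    using assms doubleton_in_contexts unfolding poss_model_def by blast
  show ?thesis
  proof
    show "S {x, y} \<subseteq> {[x \<mapsto> a, y \<mapsto> b] | a b. possible S x y a b}"
    proof
      fix s assume s: "s \<in> S {x, y}"
      then have "s = [x \<mapsto> the (s x), y \<mapsto> the (s y)]"
        using \<open>S {x, y} \<subseteq> sections_on {x, y}\<close> section_on_doubleton by blast
      then show "s \<in> {[x \<mapsto> a, y \<mapsto> b] | a b. possible S x y a b}"
        using s unfolding possible_def by (metis (mono_tags, lifting) mem_Collect_eq)
    qed
  qed (auto simp: possible_def)
qed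

lemma ex_possible:
  assumes "poss_model S" "x \<noteq> y"
  shows "\<exists>a b. possible S x y a b"
proof -
  have "S {x, y} \<noteq> {}"
    using assms doubleton_in_contexts unfolding poss_model_def by blast
  then show ?thesis unfolding support_eq_possible[OF assms] by blast
qed

lemma ex_possible_iff_marginal:
  assumes "poss_model S" "x \<noteq> y"
  shows "(\<exists>b. possible S x y a b) \<longleftrightarrow> [x \<mapsto> a] \<in> (\<lambda>s. s |` {x}) ` S {x, y}"
proof -
  have restrict: "[x \<mapsto> a', y \<mapsto> b] |` {x} = [x \<mapsto> a']" for a' b :: bool
    using assms(2) by (auto simp: restrict_map_def)
  show ?thesis
  proof
    assume "\<exists>b. possible S x y a b"
    then show "[x \<mapsto> a] \<in> (\<lambda>s. s |` {x}) ` S {x, y}"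
      unfolding possible_def by (metis restrict image_eqI)
  next
    assume "[x \<mapsto> a] \<in> (\<lambda>s. s |` {x}) ` S {x, y}"
    then obtain a' b where "possible S x y a' b" "[x \<mapsto> a] = [x \<mapsto> a']"
      unfolding support_eq_possible[OF assms] using restrict by auto
    then show "\<exists>b. possible S x y a b" by (metis map_upd_eqD1)
  qed
qed

lemma possible_marginal:
  assumes "poss_model S" "x \<noteq> y" "y \<noteq> z" "z \<noteq> x"
  shows "(\<exists>b. possible S x y a b) \<longleftrightarrow> (\<exists>c. possible S z x c a)"
proof -
  have "{x, y} \<inter> {x, z} = {x}" using assms(2-4) by auto
  then have "(\<lambda>s. s |` {x}) ` S {x, y} = (\<lambda>s. s |` {x}) ` S {x, z}"
    using assms(1) doubleton_in_contexts[OF assms(2)] doubleton_in_contexts[of x z] assms(4)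
    unfolding poss_model_def by metis
  then show ?thesis
    using ex_possible_iff_marginal[OF assms(1) assms(2)] ex_possible_iff_marginal[OF assms(1), of x z]
      possible_commute[of x z] assms(4) by auto
qed

lemma strongly_contextual_no_cycle:
  assumes "strongly_contextual S"
  shows "\<not> (possible S X1 X2 a b \<and> possible S X2 X3 b c \<and> possible S X3 X1 c a)"
proof
  assume cycle: "possible S X1 X2 a b \<and> possible S X2 X3 b c \<and> possible S X3 X1 c a"
  define g where "g x = (case x of X1 \<Rightarrow> a | X2 \<Rightarrow> b | X3 \<Rightarrow> c)" for x
  have "\<forall>C\<in>contexts. (Some \<circ> g) |` C \<in> S C"
    using cycle possible_commute[of X1 X3]
    by (simp add: contexts_def possible_def restrict_Some_comp_doubleton g_def)
  then show False using assms unfolding strongly_contextual_def by blast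
qed

locale contextual_triangle =
  fixes P Q R :: "bool \<Rightarrow> bool \<Rightarrow> bool"
  assumes marginal1: "(\<exists>b. P a b) \<longleftrightarrow> (\<exists>c. R c a)"
    and marginal2: "(\<exists>c. Q b c) \<longleftrightarrow> (\<exists>a. P a b)"
    and marginal3: "(\<exists>a. R c a) \<longleftrightarrow> (\<exists>b. Q b c)"
    and nonempty: "\<exists>a b. P a b"
    and no_cycle: "\<not> (P a b \<and> Q b c \<and> R c a)"
begin

lemma nonempty_Q: "\<exists>b c. Q b c"
  using nonempty marginal2 by blast

text \<open>Rotating the triangle preserves the assumptions, so every fact proved about \<open>P\<close>
  also holds for \<open>Q\<close> and \<open>R\<close>.\<close>

lemma rotated: "contextual_triangle Q R P"
  by unfold_locales (use marginal1 marginal2 marginal3 nonempty_Q no_cycle in blast)+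

lemma P_functional:
  assumes "P a b" "P a b'"
  shows "b = b'"
proof (rule ccontr)
  assume "b \<noteq> b'"
  obtain c where "R c a" using assms(1) marginal1 by blast
  then obtain b'' where "Q b'' c" using marginal3 by blast
  moreover have "b'' = b \<or> b'' = b'" using \<open>b \<noteq> b'\<close> by auto
  ultimately show False using \<open>R c a\<close> assms no_cycle by blast
qed

lemma P_total: "\<exists>b. P a b"
proof (rule ccontr)
  assume missing: "\<nexists>b. P a b"
  obtain a' b where "P a' b" using nonempty by blast
  moreover obtain c where "Q b c" using \<open>P a' b\<close> marginal2 by blast
  moreover obtain a'' where "R c a''" using \<open>Q b c\<close> marginal3 by blast
  moreover have "a'' = a'"
  proof -
    have "a' \<noteq> a" and "a'' \<noteq> a"
      using missing \<open>P a' b\<close> \<open>R c a''\<close> marginal1 by blast+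
    then show ?thesis by auto
  qed
  ultimately show False using no_cycle by blast
qed

lemma P_surjective: "\<exists>a. P a b"
proof -
  interpret Q: contextual_triangle Q R P by (rule rotated)
  show ?thesis using Q.P_total marginal2 by blast
qed

lemma P_xor: "\<exists>p. \<forall>a b. P a b \<longleftrightarrow> b = (a \<noteq> p)"
proof -
  obtain p where "P False p" using P_total by blast
  obtain a where "P a (\<not> p)" using P_surjective by blast
  then have "P True (\<not> p)" using \<open>P False p\<close> P_functional by (cases a) auto
  then have "P a b \<longleftrightarrow> b = (a \<noteq> p)" for a b
    using \<open>P False p\<close> P_functional by (cases a) auto
  then show ?thesis by blast
qed

lemma xor_cycle:
  obtains p q where "\<And>a b. P a b \<longleftrightarrow> b = (a \<noteq> p)" and "\<And>b c. Q b c \<longleftrightarrow> c = (b \<noteq> q)"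
    and "\<And>c a. R c a \<longleftrightarrow> a = (c \<noteq> (p = q))"
proof -
  interpret Q: contextual_triangle Q R P by (rule rotated)
  interpret R: contextual_triangle R P Q by (rule Q.rotated)
  obtain p where p: "\<And>a b. P a b \<longleftrightarrow> b = (a \<noteq> p)" using P_xor by blast
  obtain q where q: "\<And>b c. Q b c \<longleftrightarrow> c = (b \<noteq> q)" using Q.P_xor by blast
  obtain r where r: "\<And>c a. R c a \<longleftrightarrow> a = (c \<noteq> r)" using R.P_xor by blast
  have "r = (p = q)"
    using no_cycle[of False p "p \<noteq> q"] by (cases p; cases q) (simp_all add: p q r)
  then have "R c a \<longleftrightarrow> a = (c \<noteq> (p = q))" for c a
    by (simp only: r)
  with p q show ?thesis by (rule that)
qed

end

lemma strongly_contextual_triangle: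
  assumes "poss_model S" "strongly_contextual S"
  shows "contextual_triangle (possible S X1 X2) (possible S X2 X3) (possible S X3 X1)"
proof
  show "(\<exists>b. possible S X1 X2 a b) \<longleftrightarrow> (\<exists>c. possible S X3 X1 c a)"
    and "(\<exists>c. possible S X2 X3 b c) \<longleftrightarrow> (\<exists>a. possible S X1 X2 a b)"
    and "(\<exists>a. possible S X3 X1 c a) \<longleftrightarrow> (\<exists>b. possible S X2 X3 b c)" for a b c
    by (simp_all add: possible_marginal[OF assms(1)])
  show "\<exists>a b. possible S X1 X2 a b" using ex_possible[OF assms(1)] by simp
  show "\<not> (possible S X1 X2 a b \<and> possible S X2 X3 b c \<and> possible S X3 X1 c a)" for a b c
    using strongly_contextual_no_cycle[OF assms(2)] .
qed

lemma bij_xor: "bij (\<lambda>b :: bool. b \<noteq> c)"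
  by (rule o_bij[where g = "\<lambda>b. b \<noteq> c"]) auto

lemma relabel_section_id_pair:
  "relabel_section id \<tau> [x \<mapsto> a, y \<mapsto> b] = [x \<mapsto> \<tau> x a, y \<mapsto> \<tau> y b]"
  by (rule ext) (simp add: relabel_section_def inv_id)

lemma relabel_id_graph:
  assumes "poss_model S" "x \<noteq> y" "\<And>a b. possible S x y a b \<longleftrightarrow> b = f a"
    and "surj (\<tau> x)" "\<And>a. \<tau> y (f a) = g (\<tau> x a)"
  shows "relabel id \<tau> S {x, y} = {[x \<mapsto> b, y \<mapsto> g b] | b. True}"
proof -
  have "S {x, y} = range (\<lambda>a. [x \<mapsto> a, y \<mapsto> f a])"
    using support_eq_possible[OF assms(1,2)] by (auto simp: assms(3))
  then have "relabel id \<tau> S {x, y} = (\<lambda>b. [x \<mapsto> b, y \<mapsto> g b]) ` range (\<tau> x)"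
    by (simp add: relabel_def inv_id image_image relabel_section_id_pair assms(5))
  then show ?thesis by (simp add: assms(4) full_SetCompr_eq)
qed

lemma strongly_contextual_imp_relabel_PR_model:
  assumes "poss_model S" "strongly_contextual S"
  shows "\<exists>\<sigma> \<tau>. is_relabelling \<sigma> \<tau> \<and> (\<forall>C\<in>contexts. relabel \<sigma> \<tau> S C = PR_model C)"
proof -
  interpret contextual_triangle "possible S X1 X2" "possible S X2 X3" "possible S X3 X1"
    using assms by (rule strongly_contextual_triangle)
  obtain p q where p: "\<And>a b. possible S X1 X2 a b \<longleftrightarrow> b = (a \<noteq> p)"
    and q: "\<And>b c. possible S X2 X3 b c \<longleftrightarrow> c = (b \<noteq> q)"
    and r: "\<And>c a. possible S X3 X1 c a \<longleftrightarrow> a = (c \<noteq> (p = q))"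
    by (fact xor_cycle)
  define \<tau> where "\<tau> x b = (b \<noteq> (case x of X1 \<Rightarrow> False | X2 \<Rightarrow> p | X3 \<Rightarrow> p \<noteq> q))" for x b
  have bij: "bij (\<tau> x)" for x
    using bij_xor by (simp add: \<tau>_def[abs_def])
  have "relabel id \<tau> S {X1, X2} = {[X1 \<mapsto> b, X2 \<mapsto> b] | b. True}"
    by (rule relabel_id_graph[OF assms(1) _ p]) (auto simp: \<tau>_def bij bij_is_surj)
  moreover have "relabel id \<tau> S {X2, X3} = {[X2 \<mapsto> b, X3 \<mapsto> b] | b. True}"
    by (rule relabel_id_graph[OF assms(1) _ q]) (auto simp: \<tau>_def bij bij_is_surj)
  moreover have "relabel id \<tau> S {X3, X1} = {[X3 \<mapsto> b, X1 \<mapsto> \<not> b] | b. True}"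
    by (rule relabel_id_graph[OF assms(1) _ r]) (auto simp: \<tau>_def bij bij_is_surj)
  ultimately have "\<forall>C\<in>contexts. relabel id \<tau> S C = PR_model C"
    by (simp add: contexts_def PR_model_def doubleton_eq_iff insert_commute)
  moreover have "is_relabelling id \<tau>"
    using bij by (simp add: is_relabelling_def)
  ultimately show ?thesis by blast
qed

lemma strongly_contextual_cong:
  "(\<And>C. C \<in> contexts \<Longrightarrow> S C = S' C) \<Longrightarrow> strongly_contextual S \<longleftrightarrow> strongly_contextual S'"
  unfolding strongly_contextual_def by simp

lemma strongly_contextual_PR_model: "strongly_contextual PR_model"
  unfolding strongly_contextual_def
proof
  assume "\<exists>g. \<forall>C\<in>contexts. (Some \<circ> g) |` C \<in> PR_model C"
  then obtain g where g: "\<forall>C\<in>contexts. (Some \<circ> g) |` C \<in> PR_model C" by blast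
  have "[X1 \<mapsto> g X1, X2 \<mapsto> g X2] \<in> {[X1 \<mapsto> b, X2 \<mapsto> b] | b. True}"
    and "[X2 \<mapsto> g X2, X3 \<mapsto> g X3] \<in> {[X2 \<mapsto> b, X3 \<mapsto> b] | b. True}"
    and "[X3 \<mapsto> g X3, X1 \<mapsto> g X1] \<in> {[X3 \<mapsto> b, X1 \<mapsto> \<not> b] | b. True}"
    using g by (simp_all add: contexts_def PR_model_def doubleton_eq_iff insert_commute
        flip: restrict_Some_comp_doubleton)
  then have "g X1 = g X2" "g X2 = g X3" "g X1 = (\<not> g X3)"
    by (auto simp: map_upd_pair_eq_iff)
  then show False by simp
qed

lemma strongly_contextual_relabel:
  assumes "is_relabelling \<sigma> \<tau>" "strongly_contextual (relabel \<sigma> \<tau> S)"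
  shows "strongly_contextual S"
  unfolding strongly_contextual_def
proof
  assume "\<exists>g. \<forall>C\<in>contexts. (Some \<circ> g) |` C \<in> S C"
  then obtain g where g: "\<forall>C\<in>contexts. (Some \<circ> g) |` C \<in> S C" by blast
  have inj: "inj (inv \<sigma>)"
    using assms(1) unfolding is_relabelling_def by (simp add: bij_imp_bij_inv bij_is_inj)
  define h where "h y = \<tau> (inv \<sigma> y) (g (inv \<sigma> y))" for y
  have "(Some \<circ> h) |` C \<in> relabel \<sigma> \<tau> S C" if C: "C \<in> contexts" for C
  proof -
    obtain x y where "x \<noteq> y" "C = {x, y}" using C in_contexts_iff by blast
    then have "inv \<sigma> ` C \<in> contexts"
      using inj by (simp add: doubleton_in_contexts inj_eq)
    then have "(Some \<circ> g) |` (inv \<sigma> ` C) \<in> S (inv \<sigma> ` C)" using g by blast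
    moreover have "relabel_section \<sigma> \<tau> ((Some \<circ> g) |` (inv \<sigma> ` C)) = (Some \<circ> h) |` C"
      by (rule ext) (simp add: relabel_section_def restrict_map_def h_def inj_image_mem_iff[OF inj])
    ultimately show ?thesis unfolding relabel_def by (metis image_eqI)
  qed
  then show False using assms(2) unfolding strongly_contextual_def by blast
qed

theorem mainTheorem2:
  assumes "poss_model S"
  shows "strongly_contextual S \<longleftrightarrow>
    (\<exists>\<sigma> \<tau>. is_relabelling \<sigma> \<tau> \<and> (\<forall>C\<in>contexts. relabel \<sigma> \<tau> S C = PR_model C))"
proof
  assume "strongly_contextual S"
  then show "\<exists>\<sigma> \<tau>. is_relabelling \<sigma> \<tau> \<and> (\<forall>C\<in>contexts. relabel \<sigma> \<tau> S C = PR_model C)"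
    using assms strongly_contextual_imp_relabel_PR_model by blast
next
  assume "\<exists>\<sigma> \<tau>. is_relabelling \<sigma> \<tau> \<and> (\<forall>C\<in>contexts. relabel \<sigma> \<tau> S C = PR_model C)"
  then obtain \<sigma> \<tau> where relabelling: "is_relabelling \<sigma> \<tau>"
    and PR: "\<forall>C\<in>contexts. relabel \<sigma> \<tau> S C = PR_model C"
    by blast
  have "strongly_contextual (relabel \<sigma> \<tau> S)"
    using strongly_contextual_cong[of "relabel \<sigma> \<tau> S" PR_model] PR strongly_contextual_PR_model
    by simp
  with relabelling show "strongly_contextual S" by (rule strongly_contextual_relabel)
qed

end
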